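(* Let $0< m\le n$, $\ell:=n-m$, $G:=\begin{bmatrix}0_{\ell\times m}\\ I_m\end{bmatrix}$, $G^\perp:=[I_\ell\ \ 0_{\ell\times m}]$. Consider the mechanical system $$\begin{bmatrix}\dot{\mathbb q}\\ \dot{\mathbb p}\end{bmatrix}=\begin{bmatrix}0_{n\times n} & I_n\\ -I_n & -\mathbb D(\mathbb q,\mathbb p)\end{bmatrix}\begin{bmatrix}\nabla_{\mathbb q}\mathbb H\\ \nabla_{\mathbb p}\mathbb H\end{bmatrix}+\begin{bmatrix}0_{n\times m}\\ G\end{bmatrix}u,\quad \mathbb H(\mathbb q,\mathbb p)=\tfrac12\mathbb p^\top M^{-1}(\mathbb q)\mathbb p+\mathbb U(\mathbb q),\quad y=G^\top M^{-1}(\mathbb q)\mathbb p,$$ with $\mathbb q,\mathbb p\in\mathbb{R}^n$, $u,y\in\mathbb{R}^m$, $M(\mathbb q)\in\mathbb{R}^{n\times n}$ positive definite, $\mathbb D(\mathbb q,\mathbb p)\in\mathbb{R}^{n\times n}$ positive semi-definite, and $\mathbb U:\mathbb{R}^n\to\mathbb{R}_{\ge0}$. Let $q_\star\in\mathbb{R}^n$ satisfy $G^\perp\nabla\mathbb U(q_\star)=0_\ell$. Let $K_I\in\mathbb{R}^{m\times m}$ be positive definite, $K_P,K_D\in\mathbb{R}^{m\times m}$ positive semi-definite, $\kappa:=-G^\top q_\star-K_I^{-1}G^\top\nabla\mathbb U(q_\star)$, and apply the control $$u=-K_Py-K_I(G^\top\mathbb q+\kappa)-K_D\dot y.$$ Then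 the closed-loop system has a (Lyapunov) stable equilibrium point at $(q_\star,0_n)$ if $K_I$ satisfies $\nabla^2\mathbb U(q_\star)+GK_IG^\top>0$. Moreover, the closed-loop system takes the form $$\begin{bmatrix}\dot{\mathbb q}\\ \dot{\mathbb p}\end{bmatrix}=\mathbb F_d(\mathbb q,\mathbb p)\nabla\mathbb H_d(\mathbb q,\mathbb p),$$ where $$\mathbb F_d:=\begin{bmatrix}0_{n\times n} & M^{-1}M_d\\ -M_dM^{-1} & \mathbb J-\mathbb D_d\end{bmatrix},\quad \mathbb H_d(\mathbb q,\mathbb p):=\tfrac12\mathbb p^\top M_d^{-1}(\mathbb q)\mathbb p+\mathbb U_d(\mathbb q),$$ $$\mathbb U_d(\mathbb q)=\tfrac12(G^\top\mathbb q+\kappa)^\top K_I(G^\top\mathbb q+\kappa)+\mathbb U(\mathbb q),\quad M_d=M\,[M+GK_DG^\top]^{-1}M,$$ $$\mathbb J=\mathbb E^{-1}(\mathbb B^\top-\mathbb B)\mathbb E^{-\top},\quad \mathbb D_d=\mathbb E^{-1}(\mathbb D+GK_PG^\top)\mathbb E^{-\top},\quad \mathbb B(\mathbb q,\mathbb p):=GK_D\,\frac{\partial y}{\partial \mathbb q}(\mathbb q,\mathbb p),\quad \mathbb E(\mathbb q):=M(\mathbb q)M_d^{-1}(\mathbb q),$$ with $\frac{\partial y}{\partial\mathbb q}$ the $m\times n$ Jacobian of $y(\mathbb q,\mathbb p)=G^\top M^{-1}(\mathbb q)\mathbb p$ with respect to $\mathbb q$.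
   Context: All functions are at least twice continuously differentiable. $\nabla f$ denotes the (column) gradient, $\nabla^2 f$ the Hessian. A matrix $B$ is positive definite (semi-definite) if $B=B^\top$ and $x^\top Bx>0$ ($\ge0$) for all $x\ne0$ (all $x$). The control law contains $\dot y$, the time derivative of the output along the closed-loop trajectories. *)

theory Defs
  imports "HOL-Analysis.Analysis"
begin

text \<open>Vectors in R^n are \<open>real^'n\<close>; the index type carries a linear order so that
  "the last m coordinates" (used by G) makes sense. pos i is the 0-based position of i.\<close>

definition pos :: "'a::{finite,linorder} \<Rightarrow> nat" where
  "pos i = card {k. k < i}"

text \<open>G = [0_{l x m}; I_m] with l = n - m: column j is the standard basis vector of the
  (l + pos j)-th coordinate.\<close>
definition Gmat :: "real^'m::{finite,linorder}^'n::{finite,linorder}" where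
  "Gmat = (\<chi> i j. if pos i = CARD('n) - CARD('m) + pos j then 1 else 0)"

text \<open>G^perp v = 0_l, with G^perp = [I_l 0]: the first l coordinates of v vanish.\<close>
definition Gperp_zero :: "('m::{finite,linorder}) itself \<Rightarrow> real^'n::{finite,linorder} \<Rightarrow> bool" where
  "Gperp_zero _ v \<longleftrightarrow> (\<forall>i. pos i < CARD('n) - CARD('m) \<longrightarrow> v $ i = 0)"

definition pos_def :: "real^'n^'n \<Rightarrow> bool" where
  "pos_def A \<longleftrightarrow> transpose A = A \<and> (\<forall>x. x \<noteq> 0 \<longrightarrow> x \<bullet> (A *v x) > 0)"

definition psd :: "real^'n^'n \<Rightarrow> bool" where
  "psd A \<longleftrightarrow> transpose A = A \<and> (\<forall>x. x \<bullet> (A *v x) \<ge> 0)"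

definition C2 :: "('a::euclidean_space \<Rightarrow> 'b::real_normed_vector) \<Rightarrow> bool" where
  "C2 f \<longleftrightarrow> (\<forall>x. f differentiable (at x)) \<and>
     (\<forall>v x. (\<lambda>z. frechet_derivative f (at z) v) differentiable (at x)) \<and>
     (\<forall>v w. continuous_on UNIV
        (\<lambda>z. frechet_derivative (\<lambda>z'. frechet_derivative f (at z') v) (at z) w))"

definition grad :: "(real^'n \<Rightarrow> real) \<Rightarrow> real^'n \<Rightarrow> real^'n" where
  "grad f x = (\<chi> i. frechet_derivative f (at x) (axis i 1))"

definition jac :: "(real^'n \<Rightarrow> real^'m) \<Rightarrow> real^'n \<Rightarrow> real^'n^'m" where
  "jac f x = (\<chi> i j. frechet_derivative (\<lambda>z. f z $ i) (at x) (axis j 1))"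

definition hess :: "(real^'n \<Rightarrow> real) \<Rightarrow> real^'n \<Rightarrow> real^'n^'n" where
  "hess f x = jac (grad f) x"

definition Ham :: "(real^'n::finite \<Rightarrow> real^'n^'n) \<Rightarrow> (real^'n \<Rightarrow> real) \<Rightarrow> real^'n \<Rightarrow> real^'n \<Rightarrow> real" where
  "Ham M U q p = 1/2 * (p \<bullet> (matrix_inv (M q) *v p)) + U q"

definition yout :: "((real,'n::{finite,linorder}) vec \<Rightarrow> ((real,'n) vec,'n) vec) \<Rightarrow> (real,'n) vec \<Rightarrow> (real,'n) vec \<Rightarrow> (real,'m::{finite,linorder}) vec" where
  "yout M q p = transpose Gmat *v (matrix_inv (M q) *v p)"

definition cl_solution ::
  "((real,'n::{finite,linorder}) vec \<Rightarrow> ((real,'n) vec,'n) vec) \<Rightarrow> ((real,'n) vec \<Rightarrow> (real,'n) vec \<Rightarrow> ((real,'n) vec,'n) vec) \<Rightarrow> ((real,'n) vec \<Rightarrow> real)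
   \<Rightarrow> ((real,'m::{finite,linorder}) vec,'m) vec \<Rightarrow> ((real,'m) vec,'m) vec \<Rightarrow> ((real,'m) vec,'m) vec \<Rightarrow> (real,'m) vec
   \<Rightarrow> real \<Rightarrow> (real \<Rightarrow> (real,'n) vec) \<Rightarrow> (real \<Rightarrow> (real,'n) vec) \<Rightarrow> (real \<Rightarrow> (real,'n) vec) \<Rightarrow> (real \<Rightarrow> (real,'n) vec) \<Rightarrow> bool"
  where
  "cl_solution M D U KP KI KD \<kappa> T q p q' p' \<longleftrightarrow> T > 0 \<and>
     (\<exists>y' :: real \<Rightarrow> (real,'m) vec. \<forall>t\<in>{0..T}.
        (q has_vector_derivative q' t) (at t within {0..T}) \<and>
        (p has_vector_derivative p' t) (at t within {0..T}) \<and>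
        ((\<lambda>s. (yout M (q s) (p s) :: (real,'m) vec)) has_vector_derivative y' t) (at t within {0..T}) \<and>
        q' t = grad (\<lambda>pp. Ham M U (q t) pp) (p t) \<and>
        p' t = - grad (\<lambda>qq. Ham M U qq (p t)) (q t)
               - D (q t) (p t) *v grad (\<lambda>pp. Ham M U (q t) pp) (p t)
               + Gmat *v (- (KP *v yout M (q t) (p t))
                          - (KI *v (transpose Gmat *v q t + \<kappa>))
                          - (KD *v y' t)))"

definition kappa :: "((real,'m::{finite,linorder}) vec,'m) vec \<Rightarrow> ((real,'n::{finite,linorder}) vec \<Rightarrow> real) \<Rightarrow> (real,'n) vec \<Rightarrow> (real,'m) vec" where
  "kappa KI U qs = - (transpose Gmat *v qs) - matrix_inv KI *v (transpose Gmat *v grad U qs)"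

definition Md :: "((real,'n::{finite,linorder}) vec \<Rightarrow> ((real,'n) vec,'n) vec) \<Rightarrow> ((real,'m::{finite,linorder}) vec,'m) vec \<Rightarrow> (real,'n) vec \<Rightarrow> ((real,'n) vec,'n) vec" where
  "Md M KD q = M q ** matrix_inv (M q + Gmat ** KD ** transpose Gmat) ** M q"

definition Ud :: "((real,'m::{finite,linorder}) vec,'m) vec \<Rightarrow> (real,'m) vec \<Rightarrow> ((real,'n::{finite,linorder}) vec \<Rightarrow> real) \<Rightarrow> (real,'n) vec \<Rightarrow> real" where
  "Ud KI \<kappa> U q = 1/2 * ((transpose Gmat *v q + \<kappa>) \<bullet> (KI *v (transpose Gmat *v q + \<kappa>))) + U q"

definition Hd :: "((real,'n::{finite,linorder}) vec \<Rightarrow> ((real,'n) vec,'n) vec) \<Rightarrow> ((real,'m::{finite,linorder}) vec,'m) vec \<Rightarrow> ((real,'m) vec,'m) vec \<Rightarrow> (real,'m) vec \<Rightarrow> ((real,'n) vec \<Rightarrow> real) \<Rightarrow> (real,'n) vec \<Rightarrow> (real,'n) vec \<Rightarrow> real" where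
  "Hd M KD KI \<kappa> U q p = 1/2 * (p \<bullet> (matrix_inv (Md M KD q) *v p)) + Ud KI \<kappa> U q"

definition Em :: "((real,'n::{finite,linorder}) vec \<Rightarrow> ((real,'n) vec,'n) vec) \<Rightarrow> ((real,'m::{finite,linorder}) vec,'m) vec \<Rightarrow> (real,'n) vec \<Rightarrow> ((real,'n) vec,'n) vec" where
  "Em M KD q = M q ** matrix_inv (Md M KD q)"

definition Bm :: "((real,'n::{finite,linorder}) vec \<Rightarrow> ((real,'n) vec,'n) vec) \<Rightarrow> ((real,'m::{finite,linorder}) vec,'m) vec \<Rightarrow> (real,'n) vec \<Rightarrow> (real,'n) vec \<Rightarrow> ((real,'n) vec,'n) vec" where
  "Bm M KD q p = Gmat ** KD ** jac (\<lambda>qq. (yout M qq p :: (real,'m) vec)) q"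

definition Jm :: "((real,'n::{finite,linorder}) vec \<Rightarrow> ((real,'n) vec,'n) vec) \<Rightarrow> ((real,'m::{finite,linorder}) vec,'m) vec \<Rightarrow> (real,'n) vec \<Rightarrow> (real,'n) vec \<Rightarrow> ((real,'n) vec,'n) vec" where
  "Jm M KD q p = matrix_inv (Em M KD q) ** (transpose (Bm M KD q p) - Bm M KD q p) ** transpose (matrix_inv (Em M KD q))"

definition Ddm :: "((real,'n::{finite,linorder}) vec \<Rightarrow> ((real,'n) vec,'n) vec) \<Rightarrow> ((real,'n) vec \<Rightarrow> (real,'n) vec \<Rightarrow> ((real,'n) vec,'n) vec) \<Rightarrow> ((real,'m::{finite,linorder}) vec,'m) vec \<Rightarrow> ((real,'m) vec,'m) vec \<Rightarrow> (real,'n) vec \<Rightarrow> (real,'n) vec \<Rightarrow> ((real,'n) vec,'n) vec" where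
  "Ddm M D KP KD q p = matrix_inv (Em M KD q) ** (D q p + Gmat ** KP ** transpose Gmat) ** transpose (matrix_inv (Em M KD q))"

end

theory Submission
  imports Defs
begin

(*
  The shaped energy H_d = H + 1/2 y^T K_D y + 1/2 z^T K_I z, with z = G^T q + kappa, is a
  Lyapunov function.  Along solutions the plant obeys the power balance dH/dt = -v^T D v + y^T u
  (v = M^{-1} p, y = G^T v), so the control law gives dH_d/dt = -v^T D v - y^T K_P y <= 0.  The
  choice of kappa makes q_star a critical point of U_d, the Hessian condition makes it a strict
  local minimum, and M_d^{-1} = M^{-1} + M^{-1} G K_D G^T M^{-1} is positive definite, so H_d has
  a strict local minimum at (q_star, 0).  The port-Hamiltonian form is linear algebra:
  E = M M_d^{-1} = I + G K_D G^T M^{-1}, E^{-1} = M_d M^{-1}, E^{-T} grad_p H_d = M^{-1} p, and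
  E pdot = -grad_q H_d + (B^T - B - D - G K_P G^T) M^{-1} p.
*)

lemma bounded_bilinear_matrix_vector_mult:
  "bounded_bilinear ((*v) :: real^'n^'m \<Rightarrow> real^'n \<Rightarrow> real^'m)"
  unfolding bilinear_conv_bounded_bilinear[symmetric] bilinear_def
  by (auto simp: linear_iff matrix_vector_mult_add_rdistrib matrix_vector_right_distrib
      scaleR_matrix_vector_assoc matrix_scaleR_vector_ac)

lemma has_derivative_matrix_vector_mult [derivative_intros]:
  fixes f :: "'a::real_normed_vector \<Rightarrow> real^'n^'m" and g :: "'a \<Rightarrow> real^'n"
  assumes "(f has_derivative f') (at x within S)" and "(g has_derivative g') (at x within S)"
  shows "((\<lambda>x. f x *v g x) has_derivative (\<lambda>h. f x *v g' h + f' h *v g x)) (at x within S)"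
  using bounded_bilinear.FDERIV[OF bounded_bilinear_matrix_vector_mult assms] by simp

lemma has_derivative_matrix_vector_mult_const [derivative_intros]:
  fixes g :: "'a::real_normed_vector \<Rightarrow> real^'n" and A :: "real^'n^'m"
  assumes "(g has_derivative g') F"
  shows "((\<lambda>x. A *v g x) has_derivative (\<lambda>h. A *v g' h)) F"
  using bounded_linear.has_derivative[OF matrix_vector_mul_bounded_linear assms] .

lemma continuous_matrix_vector_mult [continuous_intros]:
  fixes f :: "'a::t2_space \<Rightarrow> real^'n^'m" and g :: "'a \<Rightarrow> real^'n"
  assumes "continuous F f" and "continuous F g"
  shows "continuous F (\<lambda>x. f x *v g x)"
  using bounded_bilinear.continuous[OF bounded_bilinear_matrix_vector_mult assms] .

lemma matrix_vector_mult_uminus [simp]: "(A::real^'n^'m) *v (- x) = - (A *v x)"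
  by (simp add: matrix_vector_mult_def vec_eq_iff sum_negf)

lemma matrix_add_rdistrib: "((A::real^'n^'m) + B) ** C = A ** C + B ** C"
  by (vector matrix_matrix_mult_def sum.distrib[symmetric] field_simps)

lemma inner_matrix_vector_mult_transpose: "((A::real^'n^'m) *v x) \<bullet> y = x \<bullet> (transpose A *v y)"
  by (metis dot_lmul_matrix inner_commute transpose_matrix_vector)

lemma inner_transpose_matrix_vector_mult: "x \<bullet> ((A::real^'n^'m) *v y) = (transpose A *v x) \<bullet> y"
  by (metis inner_commute inner_matrix_vector_mult_transpose)

lemma symmetric_inner_commute:
  "transpose A = A \<Longrightarrow> x \<bullet> ((A::real^'n^'n) *v y) = y \<bullet> (A *v x)"
  by (metis inner_commute inner_matrix_vector_mult_transpose)

lemma matrix_inv_right_left: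
  fixes A :: "real^'n^'n"
  assumes "invertible A"
  shows "A ** matrix_inv A = mat 1" and "matrix_inv A ** A = mat 1"
proof -
  have "A ** matrix_inv A = mat 1 \<and> matrix_inv A ** A = mat 1"
    unfolding matrix_inv_def by (rule someI_ex) (use assms in \<open>auto simp: invertible_def\<close>)
  then show "A ** matrix_inv A = mat 1" and "matrix_inv A ** A = mat 1" by auto
qed

lemma matrix_inv_eqI:
  fixes A B :: "real^'n^'n"
  assumes "A ** B = mat 1"
  shows "matrix_inv A = B"
proof -
  have "invertible A" using assms invertible_right_inverse by blast
  then have "matrix_inv A ** (A ** B) = B"
    by (metis matrix_inv_right_left(2) matrix_mul_assoc matrix_mul_lid)
  then show ?thesis using assms by simp
qed

lemma invertible_matrix_inv:
  fixes A :: "real^'n^'n"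
  shows "invertible A \<Longrightarrow> invertible (matrix_inv A)"
  using invertible_def matrix_inv_right_left by blast

lemma matrix_inv_matrix_inv:
  fixes A :: "real^'n^'n"
  shows "invertible A \<Longrightarrow> matrix_inv (matrix_inv A) = A"
  by (intro matrix_inv_eqI matrix_inv_right_left)

lemma matrix_inv_mult:
  fixes A B :: "real^'n^'n"
  assumes "invertible A" and "invertible B"
  shows "matrix_inv (A ** B) = matrix_inv B ** matrix_inv A"
proof (rule matrix_inv_eqI)
  have "A ** B ** (matrix_inv B ** matrix_inv A) = A ** (B ** matrix_inv B) ** matrix_inv A"
    by (simp add: matrix_mul_assoc)
  then show "A ** B ** (matrix_inv B ** matrix_inv A) = mat 1"
    by (simp add: assms matrix_inv_right_left)
qed

lemma symmetric_matrix_inv: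
  fixes A :: "real^'n^'n"
  assumes "invertible A" and "transpose A = A"
  shows "transpose (matrix_inv A) = matrix_inv A"
proof -
  have "transpose (matrix_inv A) ** A = mat 1"
    by (metis assms matrix_inv_right_left(1) matrix_transpose_mul transpose_mat)
  then show ?thesis
    using matrix_inv_eqI matrix_left_right_inverse by metis
qed

lemma pos_def_symmetric: "pos_def A \<Longrightarrow> transpose A = A"
  and psd_symmetric: "psd A \<Longrightarrow> transpose A = A"
  by (simp_all add: pos_def_def psd_def)

lemma pos_def_imp_psd: "pos_def A \<Longrightarrow> psd A"
  unfolding pos_def_def psd_def by (metis inner_zero_left order.strict_implies_order order_refl)

lemma pos_def_invertible:
  fixes A :: "real^'n^'n"
  assumes "pos_def A"
  shows "invertible A"
proof -
  have "x = 0" if "A *v x = 0" for x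
    using assms that unfolding pos_def_def by (metis inner_zero_right less_irrefl)
  then show ?thesis using matrix_left_invertible_ker invertible_left_inverse by blast
qed

lemma pos_def_matrix_inv:
  fixes A :: "real^'n^'n"
  assumes "pos_def A"
  shows "pos_def (matrix_inv A)"
  unfolding pos_def_def
proof (intro conjI allI impI)
  have inv: "invertible A" using pos_def_invertible assms by blast
  then show "transpose (matrix_inv A) = matrix_inv A"
    using symmetric_matrix_inv pos_def_symmetric assms by blast
  fix x :: "real^'n" assume "x \<noteq> 0"
  let ?w = "matrix_inv A *v x"
  have Aw: "A *v ?w = x" by (simp add: matrix_vector_mul_assoc matrix_inv_right_left inv)
  then have "?w \<noteq> 0" using \<open>x \<noteq> 0\<close> by auto
  then have "?w \<bullet> (A *v ?w) > 0" using assms unfolding pos_def_def by blast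
  then show "x \<bullet> (matrix_inv A *v x) > 0" using Aw by (simp add: inner_commute)
qed

lemma psd_congruence:
  fixes G :: "real^'m^'n" and K :: "real^'m^'m"
  assumes "psd K"
  shows "psd (G ** K ** transpose G)"
  unfolding psd_def
proof (intro conjI allI)
  show "transpose (G ** K ** transpose G) = G ** K ** transpose G"
    using assms by (simp add: psd_symmetric matrix_transpose_mul matrix_mul_assoc)
  fix x :: "real^'n"
  have "x \<bullet> (G ** K ** transpose G *v x) = (transpose G *v x) \<bullet> (K *v (transpose G *v x))"
    by (metis inner_matrix_vector_mult_transpose matrix_vector_mul_assoc transpose_transpose)
  then show "0 \<le> x \<bullet> (G ** K ** transpose G *v x)" using assms unfolding psd_def by simp
qed

lemma pos_def_add_psd:
  assumes "pos_def (A::real^'n^'n)" and "psd B"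
  shows "pos_def (A + B)"
  using assms unfolding pos_def_def psd_def
  by (auto simp: matrix_vector_mult_add_rdistrib inner_add_right add_pos_nonneg vec_eq_iff transpose_def)

lemma pos_def_quadratic_lower_bound:
  fixes H :: "real^'n^'n"
  assumes "pos_def H"
  obtains c where "c > 0" and "\<And>h. c * (norm h)\<^sup>2 \<le> h \<bullet> (H *v h)"
proof -
  have "\<exists>h0\<in>sphere 0 1. \<forall>u\<in>sphere 0 1. h0 \<bullet> (H *v h0) \<le> u \<bullet> (H *v u)"
    by (intro continuous_attains_inf continuous_intros continuous_on_id linear_continuous_on
        matrix_vector_mul_bounded_linear) simp_all
  then obtain h0 :: "real^'n" where h0: "h0 \<in> sphere 0 1"
    and min: "\<And>u. u \<in> sphere 0 1 \<Longrightarrow> h0 \<bullet> (H *v h0) \<le> u \<bullet> (H *v u)"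
    by blast
  have "h0 \<noteq> 0" using h0 by auto
  then have "h0 \<bullet> (H *v h0) > 0" using assms unfolding pos_def_def by blast
  moreover have "h0 \<bullet> (H *v h0) * (norm h)\<^sup>2 \<le> h \<bullet> (H *v h)" for h
  proof (cases "h = 0")
    case False
    let ?u = "(1 / norm h) *\<^sub>R h"
    have "?u \<in> sphere 0 1" using False by simp
    then have "h0 \<bullet> (H *v h0) \<le> ?u \<bullet> (H *v ?u)" using min by blast
    also have "\<dots> = (h \<bullet> (H *v h)) / (norm h)\<^sup>2"
      by (simp add: matrix_scaleR_vector_ac scaleR_matrix_vector_assoc[symmetric] power2_eq_square)
    finally show ?thesis using False by (simp add: pos_le_divide_eq)
  qed simp
  ultimately show ?thesis using that by blast
qed

lemma quadratic_form_pos_near: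
  fixes H :: "'a::metric_space \<Rightarrow> real^'n^'n"
  assumes "isCont H x0" and "pos_def (H x0)"
  obtains r where "r > 0" and "\<And>x h. dist x x0 < r \<Longrightarrow> h \<noteq> 0 \<Longrightarrow> h \<bullet> (H x *v h) > 0"
proof -
  obtain c where c: "c > 0" "\<And>h. c * (norm h)\<^sup>2 \<le> h \<bullet> (H x0 *v h)"
    using pos_def_quadratic_lower_bound[OF assms(2)] by blast
  obtain K where K: "K > 0" "\<And>(A::real^'n^'n) x. norm (A *v x) \<le> norm A * norm x * K"
    using bounded_bilinear.pos_bounded[OF bounded_bilinear_matrix_vector_mult] by blast
  obtain r where r: "r > 0" "\<And>x. dist x x0 < r \<Longrightarrow> dist (H x) (H x0) < c / K"
    using assms(1) c(1) K(1) unfolding continuous_at_eps_delta by (meson divide_pos_pos)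
  have "h \<bullet> (H x *v h) > 0" if x: "dist x x0 < r" and h: "h \<noteq> 0" for x h
  proof -
    let ?E = "H x - H x0"
    have "\<bar>h \<bullet> (?E *v h)\<bar> \<le> norm h * (norm ?E * norm h * K)"
      using Cauchy_Schwarz_ineq2[of h "?E *v h"] K(2)[of ?E h]
      by (meson mult_left_mono norm_ge_zero order_trans)
    also have "\<dots> = (norm ?E * K) * (norm h)\<^sup>2" by (simp add: power2_eq_square)
    also have "\<dots> < c * (norm h)\<^sup>2"
      using r(2)[OF x] K(1) h by (simp add: dist_norm pos_less_divide_eq)
    finally have "\<bar>h \<bullet> (?E *v h)\<bar> < c * (norm h)\<^sup>2" .
    moreover have "h \<bullet> (H x *v h) = h \<bullet> (H x0 *v h) + h \<bullet> (?E *v h)"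
      by (simp add: matrix_vector_mult_diff_rdistrib inner_diff_right)
    ultimately show ?thesis using c(2)[of h] by linarith
  qed
  then show ?thesis using r(1) that by blast
qed

lemma has_derivative_vec_lambda:
  fixes f :: "'a::real_normed_vector \<Rightarrow> 'b::euclidean_space ^ 'n"
  assumes "\<And>i. ((\<lambda>x. f x $ i) has_derivative f' i) (at a within S)"
  shows "(f has_derivative (\<lambda>h. \<chi> i. f' i h)) (at a within S)"
proof (subst has_derivative_componentwise_within, intro ballI)
  fix b :: "'b^'n" assume "b \<in> Basis"
  then obtain i u where b: "b = axis i u" and u: "u \<in> Basis" unfolding Basis_vec_def by auto
  have "((\<lambda>x. f x $ i \<bullet> u) has_derivative (\<lambda>h. f' i h \<bullet> u)) (at a within S)"
    using assms[of i] by (intro derivative_intros) auto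
  then show "((\<lambda>x. f x \<bullet> b) has_derivative (\<lambda>h. (\<chi> i. f' i h) \<bullet> b)) (at a within S)"
    by (simp add: b inner_axis)
qed

lemma differentiable_vec_lambda:
  fixes f :: "'a::real_normed_vector \<Rightarrow> 'b::euclidean_space ^ 'n"
  assumes "\<And>i. (\<lambda>x. f x $ i) differentiable (at a within S)"
  shows "f differentiable (at a within S)"
proof -
  obtain f' where "\<And>i. ((\<lambda>x. f x $ i) has_derivative f' i) (at a within S)"
    using assms unfolding differentiable_def by metis
  then show ?thesis using has_derivative_vec_lambda differentiable_def by blast
qed

lemma differentiable_vec_nth:
  "f differentiable F \<Longrightarrow> (\<lambda>x. f x $ i) differentiable F"
  unfolding differentiable_def using bounded_linear.has_derivative[OF bounded_linear_vec_nth] by blast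

lemma differentiable_prod:
  fixes f :: "'i \<Rightarrow> 'a::real_normed_vector \<Rightarrow> real"
  assumes "\<And>i. i \<in> I \<Longrightarrow> f i differentiable (at x)"
  shows "(\<lambda>x. \<Prod>i\<in>I. f i x) differentiable (at x)"
proof -
  obtain f' where "\<And>i. i \<in> I \<Longrightarrow> (f i has_derivative f' i) (at x)"
    using assms unfolding differentiable_def by metis
  then show ?thesis using has_derivative_prod differentiable_def by blast
qed

lemma differentiable_det:
  fixes F :: "'a::real_normed_vector \<Rightarrow> real^'n^'n"
  assumes "\<And>i j. (\<lambda>x. F x $ i $ j) differentiable (at x)"
  shows "(\<lambda>x. det (F x)) differentiable (at x)"
  unfolding det_def
  by (intro differentiable_sum ballI differentiable_mult differentiable_prod assms) auto

lemma matrix_inv_cramer: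
  fixes A :: "real^'n^'n"
  assumes "invertible A"
  shows "matrix_inv A $ i $ j = det (\<chi> a b. if b = i then axis j 1 $ a else A $ a $ b) / det A"
proof -
  let ?x = "matrix_inv A *v axis j 1"
  have "A *v ?x = axis j 1"
    by (simp add: matrix_vector_mul_assoc matrix_inv_right_left assms)
  then have "?x = (\<chi> k. det (\<chi> a b. if b = k then axis j 1 $ a else A $ a $ b) / det A)"
    using cramer assms invertible_det_nz by blast
  moreover have "?x $ i = matrix_inv A $ i $ j"
    by (simp add: matrix_vector_mult_def axis_def if_distrib cong: if_cong)
  ultimately show ?thesis by simp
qed

lemma differentiable_matrix_inv:
  fixes F :: "'a::real_normed_vector \<Rightarrow> real^'n^'n"
  assumes "F differentiable (at x)" and "\<And>y. invertible (F y)"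
  shows "(\<lambda>y. matrix_inv (F y)) differentiable (at x)"
proof (intro differentiable_vec_lambda)
  fix i j
  have entries: "(\<lambda>y. F y $ a $ b) differentiable (at x)" for a b
    using assms(1) by (intro differentiable_vec_nth)
  moreover have "(\<lambda>y. if b = i then c else F y $ a $ b) differentiable (at x)" for a b c
    using entries by (cases "b = i") simp_all
  moreover have "det (F x) \<noteq> 0" using assms(2) invertible_det_nz by blast
  ultimately have "(\<lambda>y. det (\<chi> a b. if b = i then axis j 1 $ a else F y $ a $ b) / det (F y))
      differentiable (at x)"
    by (intro differentiable_divide differentiable_det) simp_all
  moreover have "(\<lambda>y. matrix_inv (F y) $ i $ j)
      = (\<lambda>y. det (\<chi> a b. if b = i then axis j 1 $ a else F y $ a $ b) / det (F y))"
    using matrix_inv_cramer[OF assms(2)] by auto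
  ultimately show "(\<lambda>y. matrix_inv (F y) $ i $ j) differentiable (at x)" by simp
qed

lemma grad_inner:
  assumes "(f has_derivative f') (at x)"
  shows "grad f x \<bullet> h = f' h"
proof -
  interpret bounded_linear f' using assms has_derivative_bounded_linear by blast
  have "f' h = f' (\<Sum>i\<in>UNIV. h $ i *\<^sub>R axis i 1)"
    using basis_expansion[of h] by (simp add: scalar_mult_eq_scaleR)
  also have "\<dots> = (\<Sum>i\<in>UNIV. h $ i * f' (axis i 1))" by (simp add: sum scaleR)
  finally show ?thesis
    using frechet_derivative_at[OF assms]
    by (simp add: grad_def inner_vec_def mult.commute)
qed

lemma grad_eqI: "(f has_derivative (\<lambda>h. w \<bullet> h)) (at x) \<Longrightarrow> grad f x = w"
  using grad_inner[of f _ x] by (metis vector_eq_rdot)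

lemma jac_matrix_vector_mult:
  fixes f :: "real^'n \<Rightarrow> real^'m"
  assumes "(f has_derivative f') (at x)"
  shows "jac f x *v h = f' h"
proof -
  have "((\<lambda>z. f z $ i) has_derivative (\<lambda>h. f' h $ i)) (at x)" for i
    using bounded_linear.has_derivative[OF bounded_linear_vec_nth assms] .
  from grad_inner[OF this] show ?thesis
    by (simp add: vec_eq_iff matrix_vector_mul_component jac_def grad_def)
qed

lemma has_derivative_grad:
  "(f has_derivative f') (at x) \<Longrightarrow> (f has_derivative (\<lambda>h. grad f x \<bullet> h)) (at x)"
  using grad_inner[of f f' x] by (simp add: fun_eq_iff[symmetric])

lemma has_derivative_jac:
  "(f has_derivative f') (at x) \<Longrightarrow> (f has_derivative (\<lambda>h. jac f x *v h)) (at x)"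
  using jac_matrix_vector_mult[of f f' x] by (simp add: fun_eq_iff[symmetric])

lemma has_derivative_quadratic_form:
  fixes N :: "real^'n^'n"
  assumes "transpose N = N"
  shows "((\<lambda>x. 1/2 * (x \<bullet> (N *v x))) has_derivative (\<lambda>h. (N *v x) \<bullet> h)) (at x within S)"
proof -
  have "((\<lambda>x. 1/2 * (x \<bullet> (N *v x))) has_derivative
      (\<lambda>h. 1/2 * (x \<bullet> (N *v h) + h \<bullet> (N *v x)))) (at x within S)"
    by (intro derivative_intros)
  then show ?thesis
    using symmetric_inner_commute[OF assms, of x] by (simp add: inner_commute)
qed

lemma has_real_derivative_quadratic_form:
  fixes N :: "real^'n^'n"
  assumes "transpose N = N" and "(f has_vector_derivative f') (at t within S)"
  shows "((\<lambda>s. 1/2 * (f s \<bullet> (N *v f s))) has_real_derivative (N *v f t) \<bullet> f') (at t within S)"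
  using has_derivative_compose[OF assms(2)[unfolded has_vector_derivative_def]
      has_derivative_quadratic_form[OF assms(1)]]
  by (simp add: has_field_derivative_def mult_commute_abs)

lemma C2_has_derivative: "C2 f \<Longrightarrow> (f has_derivative frechet_derivative f (at x)) (at x)"
  unfolding C2_def by (simp add: frechet_derivative_works)

lemma C2_has_derivative_grad:
  assumes "C2 f"
  shows "(grad f has_derivative (\<lambda>h. hess f x *v h)) (at x)"
proof -
  let ?D2 = "\<lambda>i. frechet_derivative (\<lambda>z. frechet_derivative f (at z) (axis i 1)) (at x)"
  have "((\<lambda>z. grad f z $ i) has_derivative ?D2 i) (at x)" for i
    using assms unfolding C2_def by (simp add: grad_def frechet_derivative_works)
  then have "(grad f has_derivative (\<lambda>h. \<chi> i. ?D2 i h)) (at x)"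
    by (rule has_derivative_vec_lambda)
  moreover from this have "hess f x *v h = (\<chi> i. ?D2 i h)" for h
    unfolding hess_def by (rule jac_matrix_vector_mult)
  ultimately show ?thesis by simp
qed

lemma C2_isCont_hess:
  assumes "C2 f"
  shows "isCont (hess f) x"
proof -
  have "isCont (\<lambda>x. frechet_derivative (\<lambda>z. frechet_derivative f (at z) v) (at x) w) x" for v w
    using assms unfolding C2_def by (simp add: continuous_on_eq_continuous_at)
  moreover have "hess f = (\<lambda>x. \<chi> i j.
      frechet_derivative (\<lambda>z. frechet_derivative f (at z) (axis i 1)) (at x) (axis j 1))"
    by (simp add: fun_eq_iff vec_eq_iff hess_def jac_def grad_def)
  ultimately show ?thesis
    unfolding isCont_def by (simp add: tendsto_vec_lambda)
qed

lemma second_derivative_test: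
  fixes f :: "real^'n \<Rightarrow> real"
  assumes f': "\<And>x. (f has_derivative (\<lambda>h. g x \<bullet> h)) (at x)"
    and g': "\<And>x. (g has_derivative (\<lambda>h. H x *v h)) (at x)"
    and crit: "g x0 = 0" and "isCont H x0" and "pos_def (H x0)"
  obtains r where "r > 0" and "\<And>x. x \<in> cball x0 r - {x0} \<Longrightarrow> f x0 < f x"
proof -
  obtain r where r: "r > 0" "\<And>x h. dist x x0 < r \<Longrightarrow> h \<noteq> 0 \<Longrightarrow> h \<bullet> (H x *v h) > 0"
    using quadratic_form_pos_near assms(4,5) by blast
  have "f x0 < f x" if x: "x \<in> cball x0 (r/2) - {x0}" for x
  proof -
    define h where "h = x - x0"
    have "h \<noteq> 0" using x by (simp add: h_def)
    define \<phi> where "\<phi> = (\<lambda>t. f (x0 + t *\<^sub>R h))"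
    define \<phi>' where "\<phi>' = (\<lambda>t. g (x0 + t *\<^sub>R h) \<bullet> h)"
    define \<phi>'' where "\<phi>'' = (\<lambda>t. h \<bullet> (H (x0 + t *\<^sub>R h) *v h))"
    have line: "((\<lambda>t. x0 + t *\<^sub>R h) has_derivative (\<lambda>s. s *\<^sub>R h)) (at t)" for t
      by (auto intro!: derivative_eq_intros)
    have "(\<phi> has_real_derivative \<phi>' t) (at t)" for t
      using has_derivative_compose[OF line f']
      by (simp add: \<phi>_def \<phi>'_def has_field_derivative_def mult_commute_abs)
    then obtain \<xi> where \<xi>: "0 < \<xi>" "\<xi> < 1" "\<phi> 1 - \<phi> 0 = \<phi>' \<xi>"
      using MVT2[of 0 1 \<phi> \<phi>'] by auto
    have "(\<phi>' has_real_derivative \<phi>'' t) (at t)" for t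
      using has_derivative_inner_left[OF has_derivative_compose[OF line g'], of h]
      by (simp add: \<phi>'_def \<phi>''_def has_field_derivative_def matrix_scaleR_vector_ac
          scaleR_matrix_vector_assoc[symmetric] inner_commute[of h] mult_commute_abs)
    then obtain \<eta> where \<eta>: "0 < \<eta>" "\<eta> < \<xi>" "\<phi>' \<xi> - \<phi>' 0 = \<xi> * \<phi>'' \<eta>"
      using MVT2[of 0 \<xi> \<phi>' \<phi>''] \<xi>(1) by auto
    have "dist (x0 + \<eta> *\<^sub>R h) x0 = \<eta> * norm h" using \<eta> by (simp add: dist_norm)
    also have "\<dots> < r"
      using \<eta> \<xi> x r(1) mult_left_le_one_le[of "norm h" \<eta>]
      by (simp add: h_def dist_norm norm_minus_commute)
    finally have "\<phi>'' \<eta> > 0" using r(2) \<open>h \<noteq> 0\<close> by (simp add: \<phi>''_def)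
    moreover have "\<phi>' 0 = 0" by (simp add: \<phi>'_def crit)
    ultimately have "\<phi> 1 - \<phi> 0 > 0" using \<xi> \<eta> by (metis diff_zero mult_pos_pos)
    then show ?thesis by (simp add: \<phi>_def h_def)
  qed
  then show ?thesis using that r(1) by (meson half_gt_zero)
qed

lemma nonincreasing_of_nonpos_derivative:
  fixes f :: "real \<Rightarrow> real"
  assumes "\<And>s. s \<in> {a..b} \<Longrightarrow> \<exists>d\<le>0. (f has_real_derivative d) (at s within {a..b})"
    and "t \<in> {a..b}"
  shows "f t \<le> f a"
proof (rule DERIV_nonpos_imp_decreasing_open[of a t f])
  show "a \<le> t" using assms(2) by simp
  have "continuous (at s within {a..b}) f" if "s \<in> {a..b}" for s
    using assms(1)[OF that] DERIV_continuous by blast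
  then have "continuous_on {a..b} f" by (simp add: continuous_on_eq_continuous_within)
  then show "continuous_on {a..t} f" by (rule continuous_on_subset) (use assms(2) in auto)
  fix s assume "a < s" "s < t"
  then have s: "s \<in> interior {a..b}" using assms(2) by simp
  then obtain d where "d \<le> 0" "(f has_real_derivative d) (at s within {a..b})"
    using assms(1)[of s] interior_subset by blast
  then show "\<exists>d. (f has_real_derivative d) (at s) \<and> d \<le> 0"
    using at_within_interior[OF s] by auto
qed

lemma lyapunov_stable:
  fixes V :: "'a::euclidean_space \<Rightarrow> real"
  assumes "continuous_on UNIV V" and "r > 0" and min: "\<And>x. x \<in> cball x0 r - {x0} \<Longrightarrow> V x0 < V x"
    and "\<epsilon> > 0"
  obtains \<delta> where "\<delta> > 0"
    and "\<And>(T::real) x t. continuous_on {0..T} x \<Longrightarrow> (\<And>s. s \<in> {0..T} \<Longrightarrow> V (x s) \<le> V (x 0)) \<Longrightarrow>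
           dist (x 0) x0 < \<delta> \<Longrightarrow> t \<in> {0..T} \<Longrightarrow> dist (x t) x0 < \<epsilon>"
proof -
  define e where "e = min (\<epsilon>/2) r"
  have e: "e > 0" "e < \<epsilon>" "e \<le> r" using assms(2,4) by (auto simp: e_def)
  have "\<exists>y\<in>sphere x0 e. \<forall>z\<in>sphere x0 e. V y \<le> V z"
    using e(1) by (intro continuous_attains_inf continuous_on_subset[OF assms(1)]) auto
  then obtain y where y: "y \<in> sphere x0 e" and ymin: "\<And>z. z \<in> sphere x0 e \<Longrightarrow> V y \<le> V z"
    by blast
  have "V x0 < V y" using y e by (intro min) auto
  moreover have "isCont V x0" using assms(1) continuous_on_eq_continuous_at by blast
  ultimately obtain \<delta> where \<delta>: "\<delta> > 0" "\<And>x. dist x x0 < \<delta> \<Longrightarrow> dist (V x) (V x0) < V y - V x0"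
    unfolding continuous_at_eps_delta by (meson diff_gt_0_iff_gt)
  have "dist (x t) x0 < \<epsilon>"
    if x: "continuous_on {0..T} x" and dec: "\<And>s. s \<in> {0..T} \<Longrightarrow> V (x s) \<le> V (x 0)"
      and x0: "dist (x 0) x0 < min \<delta> e" and t: "t \<in> {0..T}" for T :: real and x t
  proof (rule ccontr)
    \<comment> \<open>On its way out of the \<open>\<epsilon>\<close>-ball, \<open>x\<close> crosses the sphere of radius \<open>e\<close>, where
      \<open>V\<close> exceeds its initial value.\<close>
    assume "\<not> dist (x t) x0 < \<epsilon>"
    moreover have "continuous_on {0..t} (\<lambda>s. dist (x s) x0)"
      using t by (intro continuous_intros continuous_on_subset[OF x]) auto
    ultimately obtain s where s: "0 \<le> s" "s \<le> t" "dist (x s) x0 = e"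
      using IVT'[of "\<lambda>s. dist (x s) x0" 0 e t] x0 t e(2) by auto
    then have "V y \<le> V (x s)" using ymin by (simp add: dist_commute)
    also have "\<dots> \<le> V (x 0)" using dec s t by simp
    finally show False using \<delta>(2)[of "x 0"] x0 by (simp add: dist_real_def)
  qed
  then show ?thesis using that[of "min \<delta> e"] \<delta>(1) e(1) by simp
qed

declare transpose_matrix_vector [simp del]

lemma pos_strict_mono: "strict_mono (pos :: 'a::{finite,linorder} \<Rightarrow> nat)"
proof
  fix i j :: 'a assume "i < j"
  then have "{k. k < i} \<subset> {k. k < j}" by auto
  then show "pos i < pos j" unfolding pos_def by (intro psubset_card_mono) auto
qed

lemma bij_betw_pos: "bij_betw (pos :: 'a::{finite,linorder} \<Rightarrow> nat) UNIV {..<CARD('a)}"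
proof -
  have inj: "inj (pos :: 'a \<Rightarrow> nat)" using pos_strict_mono strict_mono_imp_inj_on by blast
  have "pos i < CARD('a)" for i :: 'a
    unfolding pos_def by (intro psubset_card_mono) auto
  then have "range (pos :: 'a \<Rightarrow> nat) \<subseteq> {..<CARD('a)}" by auto
  moreover have "card (range (pos :: 'a \<Rightarrow> nat)) = card {..<CARD('a)}"
    using card_image[OF inj] by simp
  ultimately show ?thesis using inj by (simp add: bij_betw_def card_subset_eq)
qed

text \<open>\<open>G G\<^sup>T\<close> is the projection onto the last \<open>m\<close> coordinates, and \<open>G\<^sup>\<perp> g = 0\<close> says
  that \<open>g\<close> is supported there.\<close>
lemma Gmat_transpose_Gmat_Gperp_zero:
  fixes g :: "(real, 'n::{finite,linorder}) vec"
  assumes "Gperp_zero TYPE('m::{finite,linorder}) g" and "CARD('m) \<le> CARD('n)"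
  shows "(Gmat :: ((real, 'm) vec, 'n) vec) *v (transpose Gmat *v g) = g"
proof -
  let ?l = "CARD('n) - CARD('m)"
  let ?G = "Gmat :: ((real, 'm) vec, 'n) vec"
  note pos_eq = strict_mono_eq[OF pos_strict_mono]
  have Gt: "(transpose ?G *v g) $ j = g $ k" if "?l + pos j = pos k" for j k
    using that by (simp add: Gmat_def transpose_def matrix_vector_mult_def pos_eq mult_if_delta
       )
  have "(?G *v (transpose ?G *v g)) $ i = g $ i" for i
  proof (cases "?l \<le> pos i")
    case True
    have "pos i < CARD('n)" using bij_betw_pos bij_betwE by blast
    then have "pos i - ?l \<in> {..<CARD('m)}" using True assms(2) by auto
    then obtain j :: 'm where "pos j = pos i - ?l" using bij_betw_pos bij_betw_iff_bijections by metis
    then have j: "?l + pos j = pos i" using True by simp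
    then have "(?G *v (transpose ?G *v g)) $ i = (transpose ?G *v g) $ j"
      unfolding matrix_vector_mult_def[of ?G]
      by (simp add: Gmat_def j[symmetric] pos_eq mult_if_delta)
    then show ?thesis using Gt[OF j] by simp
  next
    case False
    then have "(?G *v (transpose ?G *v g)) $ i = 0"
      by (auto simp: matrix_vector_mult_def Gmat_def intro!: sum.neutral)
    then show ?thesis using False assms(1) unfolding Gperp_zero_def by simp
  qed
  then show ?thesis by (simp add: vec_eq_iff)
qed

lemma Gmat_KI_kappa:
  fixes U :: "(real, 'n::{finite,linorder}) vec \<Rightarrow> real"
    and KI :: "((real, 'm::{finite,linorder}) vec, 'm) vec"
  assumes "Gperp_zero TYPE('m) (grad U qs)" and "CARD('m) \<le> CARD('n)" and "invertible KI"
  shows "(Gmat :: ((real, 'm) vec, 'n) vec) *v (KI *v (transpose Gmat *v qs + kappa KI U qs))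
    = - grad U qs"
proof -
  let ?G = "Gmat :: ((real, 'm) vec, 'n) vec"
  have "transpose ?G *v qs + kappa KI U qs = - (matrix_inv KI *v (transpose ?G *v grad U qs))"
    by (simp add: kappa_def)
  then have "KI *v (transpose ?G *v qs + kappa KI U qs) = - (transpose ?G *v grad U qs)"
    by (simp add: matrix_vector_mul_assoc matrix_mul_assoc matrix_inv_right_left assms(3))
  then show ?thesis using Gmat_transpose_Gmat_Gperp_zero[OF assms(1,2)] by simp
qed

lemma matrix_inv_sandwich:
  fixes A Q :: "real^'n^'n"
  assumes "invertible A" and "invertible (A + Q)"
  shows "matrix_inv (A ** matrix_inv (A + Q) ** A)
    = matrix_inv A + matrix_inv A ** Q ** matrix_inv A"
proof (rule matrix_inv_eqI)
  let ?N = "matrix_inv A + matrix_inv A ** Q ** matrix_inv A"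
  have AN: "A ** ?N = (A + Q) ** matrix_inv A"
    by (simp add: matrix_add_ldistrib matrix_add_rdistrib matrix_mul_assoc
        matrix_inv_right_left assms(1))
  have "A ** matrix_inv (A + Q) ** A ** ?N = A ** matrix_inv (A + Q) ** (A ** ?N)"
    by (simp only: matrix_mul_assoc)
  also have "\<dots> = A ** (matrix_inv (A + Q) ** (A + Q)) ** matrix_inv A"
    by (simp only: AN matrix_mul_assoc)
  also have "\<dots> = mat 1" by (simp add: matrix_inv_right_left assms)
  finally show "A ** matrix_inv (A + Q) ** A ** ?N = mat 1" .
qed

locale pid_closed_loop =
  fixes M :: "(real, 'n::{finite,linorder}) vec \<Rightarrow> ((real, 'n) vec, 'n) vec"
    and D :: "(real, 'n) vec \<Rightarrow> (real, 'n) vec \<Rightarrow> ((real, 'n) vec, 'n) vec"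
    and U :: "(real, 'n) vec \<Rightarrow> real"
    and KP KI KD :: "((real, 'm::{finite,linorder}) vec, 'm) vec"
    and \<kappa> :: "(real, 'm) vec"
  assumes M_C2: "C2 M" and M_pd: "\<And>q. pos_def (M q)"
    and D_psd: "\<And>q p. psd (D q p)" and U_C2: "C2 U"
    and KP_psd: "psd KP" and KI_pd: "pos_def KI" and KD_psd: "psd KD"
begin

abbreviation G :: "((real, 'm) vec, 'n) vec" where "G \<equiv> Gmat"

abbreviation Minv' :: "(real, 'n) vec \<Rightarrow> (real, 'n) vec \<Rightarrow> ((real, 'n) vec, 'n) vec" where
  "Minv' x \<equiv> frechet_derivative (\<lambda>q. matrix_inv (M q)) (at x)"

lemma invertible_M: "invertible (M q)"
  using M_pd pos_def_invertible by blast

lemma symmetric_Minv: "transpose (matrix_inv (M q)) = matrix_inv (M q)"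
  using symmetric_matrix_inv invertible_M M_pd pos_def_symmetric by blast

lemma has_derivative_Minv: "((\<lambda>q. matrix_inv (M q)) has_derivative Minv' x) (at x)"
  using differentiable_matrix_inv[of M x] M_C2 invertible_M
  unfolding C2_def by (simp add: frechet_derivative_works)

lemma linear_Minv': "Minv' x (c *\<^sub>R h) = c *\<^sub>R Minv' x h"
  using has_derivative_Minv[THEN has_derivative_linear] by (simp add: linear_cmul)

lemma grad_Ham_p: "grad (\<lambda>p. Ham M U q p) p = matrix_inv (M q) *v p"
  unfolding Ham_def
  by (intro grad_eqI has_derivative_add_const has_derivative_quadratic_form symmetric_Minv)

lemma has_derivative_Ham_q:
  "((\<lambda>x. Ham M U x p) has_derivative
     (\<lambda>h. 1/2 * (p \<bullet> (Minv' q h *v p)) + frechet_derivative U (at q) h)) (at q)"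
proof -
  have "((\<lambda>x. 1/2 * (p \<bullet> (matrix_inv (M x) *v p)) + U x) has_derivative
     (\<lambda>h. 1/2 * (p \<bullet> (matrix_inv (M q) *v 0 + Minv' q h *v p)) + frechet_derivative U (at q) h)) (at q)"
    by (intro derivative_intros has_derivative_Minv C2_has_derivative[OF U_C2])
  then show ?thesis unfolding Ham_def by simp
qed

lemma Ham_has_real_derivative_along:
  assumes dq: "(q has_vector_derivative q') (at t within S)"
    and dp: "(p has_vector_derivative p') (at t within S)"
  shows "((\<lambda>s. Ham M U (q s) (p s)) has_real_derivative
      grad (\<lambda>x. Ham M U x (p t)) (q t) \<bullet> q' + (matrix_inv (M (q t)) *v p t) \<bullet> p') (at t within S)"
proof -
  note dq = dq[unfolded has_vector_derivative_def] and dp = dp[unfolded has_vector_derivative_def]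
  have U': "frechet_derivative U (at (q t)) (c *\<^sub>R h) = c * frechet_derivative U (at (q t)) h" for c h
    using C2_has_derivative[OF U_C2, THEN has_derivative_linear] by (simp add: linear_cmul)
  have "((\<lambda>s. 1/2 * (p s \<bullet> (matrix_inv (M (q s)) *v p s)) + U (q s)) has_derivative
     (\<lambda>h. 1/2 * (p t \<bullet> (matrix_inv (M (q t)) *v (h *\<^sub>R p') + Minv' (q t) (h *\<^sub>R q') *v p t)
            + (h *\<^sub>R p') \<bullet> (matrix_inv (M (q t)) *v p t))
          + frechet_derivative U (at (q t)) (h *\<^sub>R q'))) (at t within S)"
    by (intro derivative_intros dp has_derivative_compose[OF dq has_derivative_Minv]
        has_derivative_compose[OF dq C2_has_derivative[OF U_C2]])
  moreover have "1/2 * (p t \<bullet> (matrix_inv (M (q t)) *v (h *\<^sub>R p') + Minv' (q t) (h *\<^sub>R q') *v p t)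
            + (h *\<^sub>R p') \<bullet> (matrix_inv (M (q t)) *v p t))
          + frechet_derivative U (at (q t)) (h *\<^sub>R q')
      = (grad (\<lambda>x. Ham M U x (p t)) (q t) \<bullet> q' + (matrix_inv (M (q t)) *v p t) \<bullet> p') * h" for h
  proof -
    have "grad (\<lambda>x. Ham M U x (p t)) (q t) \<bullet> q'
        = 1/2 * (p t \<bullet> (Minv' (q t) q' *v p t)) + frechet_derivative U (at (q t)) q'"
      by (rule grad_inner[OF has_derivative_Ham_q])
    moreover have "p t \<bullet> (matrix_inv (M (q t)) *v p') = (matrix_inv (M (q t)) *v p t) \<bullet> p'"
      using symmetric_inner_commute[OF symmetric_Minv] by (simp add: inner_commute)
    ultimately show ?thesis
      by (simp add: linear_Minv' U' scaleR_matrix_vector_assoc[symmetric] inner_commute[of p']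
          algebra_simps)
  qed
  ultimately show ?thesis
    unfolding Ham_def has_field_derivative_def by (simp add: fun_eq_iff[symmetric])
qed

lemma has_derivative_yout_q:
  "((\<lambda>x. yout M x p :: (real, 'm) vec) has_derivative
     (\<lambda>h. transpose G *v (Minv' q h *v p))) (at q)"
proof -
  have "((\<lambda>x. transpose G *v (matrix_inv (M x) *v p)) has_derivative
     (\<lambda>h. transpose G *v (matrix_inv (M q) *v 0 + Minv' q h *v p))) (at q)"
    by (intro derivative_intros has_derivative_Minv)
  then show ?thesis unfolding yout_def by simp
qed

lemma yout_has_vector_derivative_along:
  assumes dq: "(q has_vector_derivative q') (at t within S)"
    and dp: "(p has_vector_derivative p') (at t within S)"
  shows "((\<lambda>s. yout M (q s) (p s) :: (real, 'm) vec) has_vector_derivative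
      jac (\<lambda>x. yout M x (p t) :: (real, 'm) vec) (q t) *v q' + transpose G *v (matrix_inv (M (q t)) *v p'))
    (at t within S)"
proof -
  note dq = dq[unfolded has_vector_derivative_def] and dp = dp[unfolded has_vector_derivative_def]
  have "((\<lambda>s. transpose G *v (matrix_inv (M (q s)) *v p s)) has_derivative
     (\<lambda>h. transpose G *v (matrix_inv (M (q t)) *v (h *\<^sub>R p') + Minv' (q t) (h *\<^sub>R q') *v p t)))
     (at t within S)"
    by (intro derivative_intros dp has_derivative_compose[OF dq has_derivative_Minv])
  then show ?thesis
    unfolding has_vector_derivative_def yout_def
      jac_matrix_vector_mult[OF has_derivative_yout_q[unfolded yout_def]]
    by (simp add: linear_Minv' matrix_vector_mult_scaleR scaleR_matrix_vector_assoc[symmetric]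
        matrix_vector_right_distrib scaleR_add_right add.commute)
qed

lemma cl_solution_at:
  assumes sol: "cl_solution M D U KP KI KD \<kappa> T q p q' p'" and t: "t \<in> {0..T}"
  shows "(q has_vector_derivative q' t) (at t within {0..T})"
    and "(p has_vector_derivative p' t) (at t within {0..T})"
    and "q' t = matrix_inv (M (q t)) *v p t"
    and "p' t = - grad (\<lambda>x. Ham M U x (p t)) (q t) - D (q t) (p t) *v (matrix_inv (M (q t)) *v p t)
        + G *v (- (KP *v yout M (q t) (p t)) - KI *v (transpose G *v q t + \<kappa>)
          - KD *v (jac (\<lambda>x. yout M x (p t) :: (real, 'm) vec) (q t) *v q' t
                   + transpose G *v (matrix_inv (M (q t)) *v p' t)))"
proof -
  obtain y' :: "real \<Rightarrow> (real, 'm) vec" where "T > 0" and H: "\<forall>t\<in>{0..T}.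
        (q has_vector_derivative q' t) (at t within {0..T}) \<and>
        (p has_vector_derivative p' t) (at t within {0..T}) \<and>
        ((\<lambda>s. yout M (q s) (p s) :: (real, 'm) vec) has_vector_derivative y' t) (at t within {0..T}) \<and>
        q' t = grad (\<lambda>pp. Ham M U (q t) pp) (p t) \<and>
        p' t = - grad (\<lambda>qq. Ham M U qq (p t)) (q t)
               - D (q t) (p t) *v grad (\<lambda>pp. Ham M U (q t) pp) (p t)
               + G *v (- (KP *v yout M (q t) (p t)) - (KI *v (transpose G *v q t + \<kappa>))
                       - (KD *v y' t))"
    using sol unfolding cl_solution_def by blast
  with t show dq: "(q has_vector_derivative q' t) (at t within {0..T})"
    and dp: "(p has_vector_derivative p' t) (at t within {0..T})"
    by blast+
  from H t show "q' t = matrix_inv (M (q t)) *v p t" by (simp add: grad_Ham_p)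
  from H t have "((\<lambda>s. yout M (q s) (p s) :: (real, 'm) vec) has_vector_derivative y' t)
      (at t within {0..T})" by blast
  from vector_derivative_unique_within_closed_interval[of 0 T t, unfolded cbox_interval,
      OF \<open>T > 0\<close> t this yout_has_vector_derivative_along[OF dq dp]]
  have "y' t = jac (\<lambda>x. yout M x (p t) :: (real, 'm) vec) (q t) *v q' t
      + transpose G *v (matrix_inv (M (q t)) *v p' t)" .
  then show "p' t = - grad (\<lambda>x. Ham M U x (p t)) (q t) - D (q t) (p t) *v (matrix_inv (M (q t)) *v p t)
        + G *v (- (KP *v yout M (q t) (p t)) - KI *v (transpose G *v q t + \<kappa>)
          - KD *v (jac (\<lambda>x. yout M x (p t) :: (real, 'm) vec) (q t) *v q' t
                   + transpose G *v (matrix_inv (M (q t)) *v p' t)))"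
    using H t by (simp add: grad_Ham_p)
qed

lemma invertible_Md: "invertible (Md M KD q)"
proof -
  have "pos_def (M q + G ** KD ** transpose G)"
    using pos_def_add_psd[OF M_pd psd_congruence[OF KD_psd]] .
  then show ?thesis
    unfolding Md_def
    by (intro invertible_mult invertible_M invertible_matrix_inv pos_def_invertible)
qed

lemma symmetric_Md: "transpose (Md M KD q) = Md M KD q"
proof -
  have "pos_def (M q + G ** KD ** transpose G)"
    using pos_def_add_psd[OF M_pd psd_congruence[OF KD_psd]] .
  then have "transpose (matrix_inv (M q + G ** KD ** transpose G)) = matrix_inv (M q + G ** KD ** transpose G)"
    by (intro symmetric_matrix_inv pos_def_invertible pos_def_symmetric)
  then show ?thesis
    unfolding Md_def by (simp add: matrix_transpose_mul matrix_mul_assoc pos_def_symmetric[OF M_pd])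
qed

lemma matrix_inv_Md:
  "matrix_inv (Md M KD q)
    = matrix_inv (M q) + matrix_inv (M q) ** (G ** KD ** transpose G) ** matrix_inv (M q)"
  unfolding Md_def
  using pos_def_add_psd[OF M_pd psd_congruence[OF KD_psd]]
  by (intro matrix_inv_sandwich invertible_M pos_def_invertible)

lemma pos_def_matrix_inv_Md: "pos_def (matrix_inv (Md M KD q))"
proof -
  let ?A = "matrix_inv (M q)"
  have "?A ** (G ** KD ** transpose G) ** ?A = (?A ** G) ** KD ** transpose (?A ** G)"
    by (simp add: matrix_transpose_mul symmetric_Minv matrix_mul_assoc)
  then show ?thesis
    unfolding matrix_inv_Md
    using pos_def_add_psd[OF pos_def_matrix_inv[OF M_pd] psd_congruence[OF KD_psd]] by simp
qed

lemma Hd_eq: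
  "Hd M KD KI \<kappa> U q p = Ham M U q p + 1/2 * (yout M q p \<bullet> (KD *v yout M q p))
     + 1/2 * ((transpose G *v q + \<kappa>) \<bullet> (KI *v (transpose G *v q + \<kappa>)))"
proof -
  let ?A = "matrix_inv (M q)"
  have "p \<bullet> (?A ** (G ** KD ** transpose G) ** ?A *v p)
      = (transpose G *v (?A *v p)) \<bullet> (KD *v (transpose G *v (?A *v p)))"
    by (simp add: matrix_vector_mul_assoc[symmetric] inner_transpose_matrix_vector_mult symmetric_Minv)
  then show ?thesis
    by (simp add: Hd_def Ud_def Ham_def yout_def matrix_inv_Md algebra_simps)
qed

lemma grad_Hd_p: "grad (\<lambda>p. Hd M KD KI \<kappa> U q p) p = matrix_inv (Md M KD q) *v p"
  unfolding Hd_def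
  by (intro grad_eqI has_derivative_add_const has_derivative_quadratic_form symmetric_matrix_inv
      invertible_Md symmetric_Md)

lemma grad_Hd_q:
  "grad (\<lambda>x. Hd M KD KI \<kappa> U x p) q = grad (\<lambda>x. Ham M U x p) q
     + transpose (jac (\<lambda>x. yout M x p :: (real, 'm) vec) q) *v (KD *v yout M q p)
     + G *v (KI *v (transpose G *v q + \<kappa>))"
proof (rule grad_eqI)
  let ?gH = "grad (\<lambda>x. Ham M U x p) q" and ?J = "jac (\<lambda>x. yout M x p :: (real, 'm) vec) q"
  let ?y = "yout M q p :: (real, 'm) vec" and ?z = "transpose G *v q + \<kappa>"
  have "((\<lambda>x. Ham M U x p + 1/2 * (yout M x p \<bullet> (KD *v yout M x p))
        + 1/2 * ((transpose G *v x + \<kappa>) \<bullet> (KI *v (transpose G *v x + \<kappa>)))) has_derivative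
      (\<lambda>h. ?gH \<bullet> h + 1/2 * (?y \<bullet> (KD *v (?J *v h)) + (?J *v h) \<bullet> (KD *v ?y))
        + 1/2 * (?z \<bullet> (KI *v (transpose G *v h + 0)) + (transpose G *v h + 0) \<bullet> (KI *v ?z)))) (at q)"
    by (intro derivative_intros has_derivative_grad[OF has_derivative_Ham_q]
        has_derivative_jac[OF has_derivative_yout_q])
  moreover have "?gH \<bullet> h + 1/2 * (?y \<bullet> (KD *v (?J *v h)) + (?J *v h) \<bullet> (KD *v ?y))
        + 1/2 * (?z \<bullet> (KI *v (transpose G *v h + 0)) + (transpose G *v h + 0) \<bullet> (KI *v ?z))
      = (?gH + transpose ?J *v (KD *v ?y) + G *v (KI *v ?z)) \<bullet> h" for h
  proof -
    have "?y \<bullet> (KD *v (?J *v h)) = (?J *v h) \<bullet> (KD *v ?y)"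
      and "?z \<bullet> (KI *v (transpose G *v h)) = (transpose G *v h) \<bullet> (KI *v ?z)"
      using symmetric_inner_commute[OF psd_symmetric[OF KD_psd]]
        symmetric_inner_commute[OF pos_def_symmetric[OF KI_pd]] by auto
    then show ?thesis
      by (simp add: inner_add_left inner_add_right inner_matrix_vector_mult_transpose inner_commute[of _ h])
  qed
  moreover have "(\<lambda>x. Hd M KD KI \<kappa> U x p) = (\<lambda>x. Ham M U x p + 1/2 * (yout M x p \<bullet> (KD *v yout M x p))
        + 1/2 * ((transpose G *v x + \<kappa>) \<bullet> (KI *v (transpose G *v x + \<kappa>))))"
    by (simp only: Hd_eq)
  ultimately show "((\<lambda>x. Hd M KD KI \<kappa> U x p) has_derivative
      (\<lambda>h. (?gH + transpose ?J *v (KD *v ?y) + G *v (KI *v ?z)) \<bullet> h)) (at q)"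
    by (metis (no_types, lifting) ext)
qed

lemma Hd_has_real_derivative_along_solution:
  assumes sol: "cl_solution M D U KP KI KD \<kappa> T q p q' p'" and t: "t \<in> {0..T}"
  shows "((\<lambda>s. Hd M KD KI \<kappa> U (q s) (p s)) has_real_derivative
      - ((matrix_inv (M (q t)) *v p t) \<bullet> (D (q t) (p t) *v (matrix_inv (M (q t)) *v p t)))
      - yout M (q t) (p t) \<bullet> (KP *v yout M (q t) (p t))) (at t within {0..T})"
proof -
  note dq = cl_solution_at(1)[OF sol t] and dp = cl_solution_at(2)[OF sol t]
  let ?v = "matrix_inv (M (q t)) *v p t" and ?y = "yout M (q t) (p t) :: (real, 'm) vec"
  let ?z = "transpose G *v q t + \<kappa>" and ?gH = "grad (\<lambda>x. Ham M U x (p t)) (q t)"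
  define ydot where "ydot = jac (\<lambda>x. yout M x (p t) :: (real, 'm) vec) (q t) *v q' t
    + transpose G *v (matrix_inv (M (q t)) *v p' t)"
  have q': "q' t = ?v" by (rule cl_solution_at(3)[OF sol t])
  have p': "p' t = - ?gH - D (q t) (p t) *v ?v + G *v (- (KP *v ?y) - KI *v ?z - KD *v ydot)"
    using cl_solution_at(4)[OF sol t] by (simp add: ydot_def)
  have dy: "((\<lambda>s. yout M (q s) (p s) :: (real, 'm) vec) has_vector_derivative ydot) (at t within {0..T})"
    unfolding ydot_def by (rule yout_has_vector_derivative_along[OF dq dp])
  have dz: "((\<lambda>s. transpose G *v q s + \<kappa>) has_vector_derivative transpose G *v ?v) (at t within {0..T})"
    using has_derivative_add_const[OF has_derivative_matrix_vector_mult_const[OF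
        dq[unfolded has_vector_derivative_def]], of "transpose G" \<kappa>] q'
    by (simp add: has_vector_derivative_def matrix_vector_mult_scaleR)
  have "((\<lambda>s. Hd M KD KI \<kappa> U (q s) (p s)) has_real_derivative
      ?gH \<bullet> q' t + ?v \<bullet> p' t + (KD *v ?y) \<bullet> ydot + (KI *v ?z) \<bullet> (transpose G *v ?v)) (at t within {0..T})"
    unfolding Hd_eq
    by (intro DERIV_add Ham_has_real_derivative_along[OF dq dp]
        has_real_derivative_quadratic_form[OF _ dy] has_real_derivative_quadratic_form[OF _ dz]
        psd_symmetric[OF KD_psd] pos_def_symmetric[OF KI_pd])
  moreover have "?gH \<bullet> q' t + ?v \<bullet> p' t + (KD *v ?y) \<bullet> ydot + (KI *v ?z) \<bullet> (transpose G *v ?v)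
      = - (?v \<bullet> (D (q t) (p t) *v ?v)) - ?y \<bullet> (KP *v ?y)"
  proof -
    have y: "transpose G *v ?v = ?y" by (simp add: yout_def)
    then have "?v \<bullet> p' t = - (?gH \<bullet> ?v) - ?v \<bullet> (D (q t) (p t) *v ?v)
        - ?y \<bullet> (KP *v ?y) - ?y \<bullet> (KI *v ?z) - ?y \<bullet> (KD *v ydot)"
      unfolding p'
      by (simp add: inner_diff_right inner_add_right inner_commute[of ?v ?gH]
          inner_transpose_matrix_vector_mult[of ?v G])
    moreover have "(KD *v ?y) \<bullet> ydot = ?y \<bullet> (KD *v ydot)"
      using symmetric_inner_commute[OF psd_symmetric[OF KD_psd], of ?y ydot] inner_commute by metis
    moreover have "(KI *v ?z) \<bullet> (transpose G *v ?v) = ?y \<bullet> (KI *v ?z)"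
      by (simp add: y inner_commute)
    ultimately show ?thesis unfolding q' by linarith
  qed
  ultimately show ?thesis by simp
qed

lemma Ud_strict_local_min:
  assumes crit: "G *v (KI *v (transpose G *v qs + \<kappa>)) = - grad U qs"
    and pd: "pos_def (hess U qs + G ** KI ** transpose G)"
  obtains r where "r > 0" and "\<And>q. q \<in> cball qs r - {qs} \<Longrightarrow> Ud KI \<kappa> U qs < Ud KI \<kappa> U q"
proof -
  define g where "g x = grad U x + G *v (KI *v (transpose G *v x + \<kappa>))" for x
  define H where "H x = hess U x + G ** KI ** transpose G" for x
  have "(Ud KI \<kappa> U has_derivative (\<lambda>h. g x \<bullet> h)) (at x)" for x
  proof -
    have "((\<lambda>x. 1/2 * ((transpose G *v x + \<kappa>) \<bullet> (KI *v (transpose G *v x + \<kappa>))) + U x) has_derivative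
        (\<lambda>h. (KI *v (transpose G *v x + \<kappa>)) \<bullet> (transpose G *v h + 0) + grad U x \<bullet> h)) (at x)"
      by (intro derivative_intros has_derivative_grad[OF C2_has_derivative[OF U_C2]]
          has_derivative_compose[OF _ has_derivative_quadratic_form] pos_def_symmetric[OF KI_pd])
    then show ?thesis
      unfolding Ud_def[abs_def] g_def
      by (simp add: inner_add_left inner_matrix_vector_mult_transpose inner_commute[of _ h] add.commute)
  qed
  moreover have "(g has_derivative (\<lambda>h. H x *v h)) (at x)" for x
  proof -
    have "(g has_derivative (\<lambda>h. hess U x *v h + G *v (KI *v (transpose G *v h + 0)))) (at x)"
      unfolding g_def[abs_def] by (intro derivative_intros C2_has_derivative_grad[OF U_C2])
    then show ?thesis
      by (simp add: H_def matrix_vector_mult_add_rdistrib matrix_vector_mul_assoc matrix_mul_assoc)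
  qed
  moreover have "g qs = 0" using crit by (simp add: g_def)
  moreover have "isCont H qs"
    unfolding H_def[abs_def] by (intro continuous_intros C2_isCont_hess[OF U_C2])
  moreover have "pos_def (H qs)" using pd by (simp add: H_def)
  ultimately show ?thesis using second_derivative_test that by blast
qed

lemma Hd_strict_local_min:
  assumes crit: "G *v (KI *v (transpose G *v qs + \<kappa>)) = - grad U qs"
    and pd: "pos_def (hess U qs + G ** KI ** transpose G)"
  obtains r where "r > 0"
    and "\<And>x. x \<in> cball (qs, 0) r - {(qs, 0)} \<Longrightarrow> Hd M KD KI \<kappa> U qs 0 < Hd M KD KI \<kappa> U (fst x) (snd x)"
proof -
  obtain r where r: "r > 0" "\<And>q. q \<in> cball qs r - {qs} \<Longrightarrow> Ud KI \<kappa> U qs < Ud KI \<kappa> U q"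
    using Ud_strict_local_min[OF crit pd] by blast
  have main: "Hd M KD KI \<kappa> U qs 0 < Hd M KD KI \<kappa> U a b"
    if ab: "(a, b) \<in> cball (qs, 0) r - {(qs, 0)}" for a b
  proof -
    have a: "a \<in> cball qs r" using ab dist_fst_le[of "(qs, 0)" "(a, b)"] by simp
    have "b \<bullet> (matrix_inv (Md M KD a) *v b) \<ge> 0"
      and "b \<noteq> 0 \<Longrightarrow> b \<bullet> (matrix_inv (Md M KD a) *v b) > 0"
      using pos_def_matrix_inv_Md[of a] pos_def_imp_psd unfolding pos_def_def psd_def by blast+
    moreover have "Ud KI \<kappa> U qs \<le> Ud KI \<kappa> U a"
      using r(2)[of a] a by (cases "a = qs") auto
    moreover have "Ud KI \<kappa> U qs < Ud KI \<kappa> U a" if "b = 0"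
      using r(2)[of a] a ab that by auto
    ultimately show ?thesis by (cases "b = 0") (simp_all add: Hd_def)
  qed
  show ?thesis
  proof (rule that[OF r(1)])
    fix x :: "(real, 'n) vec \<times> (real, 'n) vec" assume "x \<in> cball (qs, 0) r - {(qs, 0)}"
    with main[of "fst x" "snd x"] show "Hd M KD KI \<kappa> U qs 0 < Hd M KD KI \<kappa> U (fst x) (snd x)" by simp
  qed
qed

lemma continuous_on_Hd: "continuous_on UNIV (\<lambda>x. Hd M KD KI \<kappa> U (fst x) (snd x))"
proof -
  have Minv: "isCont (\<lambda>x. matrix_inv (M (fst x))) x" and U: "isCont (\<lambda>x. U (fst x)) x"
    for x :: "(real, 'n) vec \<times> (real, 'n) vec"
    using has_derivative_continuous[OF has_derivative_Minv]
      has_derivative_continuous[OF C2_has_derivative[OF U_C2]]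
    by (auto intro: isCont_o2[OF isCont_fst])
  show ?thesis
    unfolding Hd_eq Ham_def yout_def
    by (intro continuous_at_imp_continuous_on ballI continuous_intros Minv U)
qed

lemma equilibrium_solution:
  assumes crit: "G *v (KI *v (transpose G *v qs + \<kappa>)) = - grad U qs" and "T > 0"
  shows "cl_solution M D U KP KI KD \<kappa> T (\<lambda>_. qs) (\<lambda>_. 0) (\<lambda>_. 0) (\<lambda>_. 0)"
proof -
  have "(\<lambda>x. Ham M U x 0) = U" by (simp add: Ham_def)
  then show ?thesis
    unfolding cl_solution_def using assms
    by (auto intro!: exI[of _ "\<lambda>_. 0"] simp: grad_Ham_p yout_def)
qed

lemma Hd_nonincreasing_along_solution:
  assumes sol: "cl_solution M D U KP KI KD \<kappa> T q p q' p'" and t: "t \<in> {0..T}"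
  shows "Hd M KD KI \<kappa> U (q t) (p t) \<le> Hd M KD KI \<kappa> U (q 0) (p 0)"
proof (rule nonincreasing_of_nonpos_derivative[OF _ t])
  fix s assume s: "s \<in> {0..T}"
  let ?v = "matrix_inv (M (q s)) *v p s" and ?y = "yout M (q s) (p s) :: (real, 'm) vec"
  have "?v \<bullet> (D (q s) (p s) *v ?v) \<ge> 0" and "?y \<bullet> (KP *v ?y) \<ge> 0"
    using D_psd KP_psd unfolding psd_def by blast+
  then have "- (?v \<bullet> (D (q s) (p s) *v ?v)) - ?y \<bullet> (KP *v ?y) \<le> 0" by linarith
  with Hd_has_real_derivative_along_solution[OF sol s]
  show "\<exists>d\<le>0. ((\<lambda>s. Hd M KD KI \<kappa> U (q s) (p s)) has_real_derivative d) (at s within {0..T})"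
    by blast
qed

lemma continuous_on_solution:
  assumes sol: "cl_solution M D U KP KI KD \<kappa> T q p q' p'"
  shows "continuous_on {0..T} (\<lambda>s. (q s, p s))"
proof -
  have "continuous_on {0..T} q" and "continuous_on {0..T} p"
    unfolding continuous_on_eq_continuous_within
    using has_vector_derivative_continuous[OF cl_solution_at(1)[OF sol]]
      has_vector_derivative_continuous[OF cl_solution_at(2)[OF sol]] by blast+
  then show ?thesis by (rule continuous_on_Pair)
qed

lemma stable_equilibrium:
  assumes crit: "G *v (KI *v (transpose G *v qs + \<kappa>)) = - grad U qs"
    and pd: "pos_def (hess U qs + G ** KI ** transpose G)" and "\<epsilon> > 0"
  shows "\<exists>\<delta>>0. \<forall>T q p q' p'. cl_solution M D U KP KI KD \<kappa> T q p q' p' \<longrightarrow>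
    norm (q 0 - qs, p 0) < \<delta> \<longrightarrow> (\<forall>t\<in>{0..T}. norm (q t - qs, p t) < \<epsilon>)"
proof -
  let ?V = "\<lambda>x. Hd M KD KI \<kappa> U (fst x) (snd x)"
  obtain r where "r > 0" and min: "\<And>x. x \<in> cball (qs, 0) r - {(qs, 0)} \<Longrightarrow> ?V (qs, 0) < ?V x"
    using Hd_strict_local_min[OF crit pd] by auto
  show ?thesis
  proof (rule lyapunov_stable[OF continuous_on_Hd \<open>r > 0\<close> min \<open>\<epsilon> > 0\<close>])
    fix \<delta> :: real
    assume "\<delta> > 0" and stable: "\<And>(T::real) x t. continuous_on {0..T} x \<Longrightarrow>
      (\<And>s. s \<in> {0..T} \<Longrightarrow> ?V (x s) \<le> ?V (x 0)) \<Longrightarrow> dist (x 0) (qs, 0) < \<delta> \<Longrightarrow> t \<in> {0..T} \<Longrightarrow>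
      dist (x t) (qs, 0) < \<epsilon>"
    have "norm (q t - qs, p t) < \<epsilon>"
      if sol: "cl_solution M D U KP KI KD \<kappa> T q p q' p'" and "norm (q 0 - qs, p 0) < \<delta>" and "t \<in> {0..T}"
      for T q p q' p' t
      using stable[OF continuous_on_solution[OF sol], of t] Hd_nonincreasing_along_solution[OF sol] that
      by (simp add: dist_norm)
    with \<open>\<delta> > 0\<close> show ?thesis by blast
  qed
qed

lemma invertible_Em: "invertible (Em M KD q)"
  unfolding Em_def by (intro invertible_mult invertible_M invertible_matrix_inv invertible_Md)

lemma matrix_inv_Em: "matrix_inv (Em M KD q) = Md M KD q ** matrix_inv (M q)"
  unfolding Em_def
  by (simp add: matrix_inv_mult invertible_M invertible_matrix_inv invertible_Md matrix_inv_matrix_inv)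

lemma Em_mult: "Em M KD q *v w = w + G *v (KD *v (transpose G *v (matrix_inv (M q) *v w)))"
proof -
  have "Em M KD q = mat 1 + G ** KD ** transpose G ** matrix_inv (M q)"
    by (simp add: Em_def matrix_inv_Md matrix_add_ldistrib matrix_mul_assoc matrix_inv_right_left
        invertible_M)
  then show ?thesis by (simp add: matrix_vector_mult_add_rdistrib matrix_vector_mul_assoc matrix_mul_assoc)
qed

lemma transpose_matrix_inv_Em_mult:
  "transpose (matrix_inv (Em M KD q)) *v (matrix_inv (Md M KD q) *v p) = matrix_inv (M q) *v p"
proof -
  have "transpose (matrix_inv (Em M KD q)) = matrix_inv (M q) ** Md M KD q"
    by (simp add: matrix_inv_Em matrix_transpose_mul symmetric_Minv symmetric_Md)
  then show ?thesis
    by (simp add: matrix_vector_mul_assoc matrix_mul_assoc[symmetric] matrix_inv_right_left invertible_Md)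
qed

lemma Em_mult_momentum_rate:
  assumes sol: "cl_solution M D U KP KI KD \<kappa> T q p q' p'" and t: "t \<in> {0..T}"
  shows "Em M KD (q t) *v p' t = - grad (\<lambda>x. Hd M KD KI \<kappa> U x (p t)) (q t)
    + (transpose (Bm M KD (q t) (p t)) - Bm M KD (q t) (p t) - (D (q t) (p t) + G ** KP ** transpose G))
      *v (matrix_inv (M (q t)) *v p t)"
proof -
  let ?A = "matrix_inv (M (q t))" and ?B = "Bm M KD (q t) (p t)"
  let ?v = "?A *v p t" and ?w = "?A *v p' t" and ?y = "yout M (q t) (p t) :: (real, 'm) vec"
  let ?z = "transpose G *v q t + \<kappa>" and ?gH = "grad (\<lambda>x. Ham M U x (p t)) (q t)"
  let ?J = "jac (\<lambda>x. yout M x (p t) :: (real, 'm) vec) (q t)"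
  define ydot where "ydot = ?J *v q' t + transpose G *v ?w"
  have q': "q' t = ?v" by (rule cl_solution_at(3)[OF sol t])
  have p': "p' t = - ?gH - D (q t) (p t) *v ?v + G *v (- (KP *v ?y) - KI *v ?z - KD *v ydot)"
    using cl_solution_at(4)[OF sol t] by (simp add: ydot_def)
  have y: "?y = transpose G *v ?v" by (simp add: yout_def)
  have Bt: "transpose ?B *v ?v = transpose ?J *v (KD *v ?y)"
    by (simp add: Bm_def y matrix_transpose_mul psd_symmetric[OF KD_psd] matrix_vector_mul_assoc
        matrix_mul_assoc)
  have B: "?B *v ?v = G *v (KD *v (?J *v ?v))"
    by (simp add: Bm_def matrix_vector_mul_assoc matrix_mul_assoc)
  have Dtot: "(D (q t) (p t) + G ** KP ** transpose G) *v ?v = D (q t) (p t) *v ?v + G *v (KP *v ?y)"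
    by (simp add: y matrix_vector_mult_add_rdistrib matrix_vector_mul_assoc matrix_mul_assoc
        matrix_add_rdistrib)
  have "G *v (- (KP *v ?y) - KI *v ?z - KD *v ydot)
      = - (G *v (KP *v ?y)) - G *v (KI *v ?z) - G *v (KD *v (?J *v ?v)) - G *v (KD *v (transpose G *v ?w))"
    by (simp add: ydot_def q' matrix_vector_right_distrib matrix_vector_mult_diff_distrib)
  then have "Em M KD (q t) *v p' t = - ?gH - D (q t) (p t) *v ?v - G *v (KP *v ?y) - G *v (KI *v ?z)
      - G *v (KD *v (?J *v ?v))"
    unfolding Em_mult by (subst p') simp
  then show ?thesis
    unfolding grad_Hd_q matrix_vector_mult_diff_rdistrib Bt B Dtot by simp
qed

lemma port_Hamiltonian_form:
  assumes sol: "cl_solution M D U KP KI KD \<kappa> T q p q' p'" and t: "t \<in> {0..T}"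
  shows "q' t = matrix_inv (M (q t)) ** Md M KD (q t)
            *v grad (\<lambda>pp. Hd M KD KI \<kappa> U (q t) pp) (p t)
    \<and> p' t = - (Md M KD (q t) ** matrix_inv (M (q t))
              *v grad (\<lambda>qq. Hd M KD KI \<kappa> U qq (p t)) (q t))
            + (Jm M KD (q t) (p t) - Ddm M D KP KD (q t) (p t))
              *v grad (\<lambda>pp. Hd M KD KI \<kappa> U (q t) pp) (p t)"
proof -
  let ?A = "matrix_inv (M (q t))" and ?Md = "Md M KD (q t)" and ?E = "Em M KD (q t)"
  let ?B = "Bm M KD (q t) (p t)" and ?Dtot = "D (q t) (p t) + G ** KP ** transpose G"
  let ?gq = "grad (\<lambda>qq. Hd M KD KI \<kappa> U qq (p t)) (q t)"
  have gp: "grad (\<lambda>pp. Hd M KD KI \<kappa> U (q t) pp) (p t) = matrix_inv ?Md *v p t"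
    by (rule grad_Hd_p)
  have "q' t = ?A *v p t" by (rule cl_solution_at(3)[OF sol t])
  then have "q' t = ?A ** ?Md *v grad (\<lambda>pp. Hd M KD KI \<kappa> U (q t) pp) (p t)"
    by (simp add: gp matrix_vector_mul_assoc matrix_mul_assoc[symmetric] matrix_inv_right_left invertible_Md)
  moreover
  have "(Jm M KD (q t) (p t) - Ddm M D KP KD (q t) (p t)) *v (matrix_inv ?Md *v p t)
      = matrix_inv ?E *v ((transpose ?B - ?B - ?Dtot) *v (?A *v p t))"
    unfolding Jm_def Ddm_def matrix_vector_mult_diff_rdistrib matrix_vector_mul_assoc[symmetric]
      transpose_matrix_inv_Em_mult
    by (simp only: matrix_vector_mult_diff_distrib)
  moreover have "p' t = matrix_inv ?E *v (?E *v p' t)"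
    by (simp add: matrix_vector_mul_assoc matrix_inv_right_left invertible_Em)
  then have "p' t = matrix_inv ?E *v (- ?gq + (transpose ?B - ?B - ?Dtot) *v (?A *v p t))"
    by (simp only: Em_mult_momentum_rate[OF sol t])
  ultimately show ?thesis
    unfolding gp by (simp add: matrix_inv_Em matrix_vector_mult_diff_distrib)
qed
end

theorem proposition1:
  fixes M :: "(real,'n::{finite,linorder}) vec \<Rightarrow> ((real,'n) vec,'n) vec"
    and D :: "(real,'n) vec \<Rightarrow> (real,'n) vec \<Rightarrow> ((real,'n) vec,'n) vec"
    and U :: "(real,'n) vec \<Rightarrow> real"
    and KP KI KD :: "((real,'m::{finite,linorder}) vec,'m) vec"
    and qs :: "(real,'n) vec"
  assumes mn: "CARD('m) \<le> CARD('n)"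
    and M_C2: "C2 M" and M_pd: "\<And>q. pos_def (M q)"
    and D_C2: "C2 (\<lambda>x. D (fst x) (snd x))" and D_psd: "\<And>q p. psd (D q p)"
    and U_C2: "C2 U" and U_nonneg: "\<And>q. U q \<ge> 0"
    and qs_eq: "Gperp_zero TYPE('m) (grad U qs)"
    and KI_pd: "pos_def KI" and KP_psd: "psd KP" and KD_psd: "psd KD"
  shows
    "(\<forall>T>0. cl_solution M D U KP KI KD (kappa KI U qs) T (\<lambda>_. qs) (\<lambda>_. 0) (\<lambda>_. 0) (\<lambda>_. 0))
     \<and> (pos_def (hess U qs + (Gmat :: ((real,'m) vec,'n) vec) ** KI ** transpose Gmat) \<longrightarrow>
          (\<forall>\<epsilon>>0. \<exists>\<delta>>0. \<forall>T q p q' p'.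
             cl_solution M D U KP KI KD (kappa KI U qs) T q p q' p' \<longrightarrow> norm (q 0 - qs, p 0) < \<delta> \<longrightarrow>
             (\<forall>t\<in>{0..T}. norm (q t - qs, p t) < \<epsilon>)))
     \<and> (\<forall>T q p q' p' t.
          cl_solution M D U KP KI KD (kappa KI U qs) T q p q' p' \<longrightarrow> t \<in> {0..T} \<longrightarrow>
            q' t = matrix_inv (M (q t)) ** Md M KD (q t)
                     *v grad (\<lambda>pp. Hd M KD KI (kappa KI U qs) U (q t) pp) (p t)
          \<and> p' t = - (Md M KD (q t) ** matrix_inv (M (q t))
                       *v grad (\<lambda>qq. Hd M KD KI (kappa KI U qs) U qq (p t)) (q t))
                   + (Jm M KD (q t) (p t) - Ddm M D KP KD (q t) (p t))
                       *v grad (\<lambda>pp. Hd M KD KI (kappa KI U qs) U (q t) pp) (p t))"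
proof -
  \<comment> \<open>\<open>D_C2\<close> and \<open>U_nonneg\<close> are not needed: only the values of \<open>D\<close> enter, and the
    minimum of \<open>U\<^sub>d\<close> at \<open>q\<^sub>\<star>\<close> does not depend on the sign of \<open>U\<close>.\<close>
  interpret pid_closed_loop M D U KP KI KD "kappa KI U qs"
    using M_C2 M_pd D_psd U_C2 KP_psd KI_pd KD_psd by unfold_locales
  have crit: "(Gmat :: ((real,'m) vec,'n) vec) *v (KI *v (transpose Gmat *v qs + kappa KI U qs))
      = - grad U qs"
    by (rule Gmat_KI_kappa[OF qs_eq mn pos_def_invertible[OF KI_pd]])
  show ?thesis
    using equilibrium_solution[OF crit] stable_equilibrium[OF crit] port_Hamiltonian_form by blast
qed

end
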